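(* Let $n \geq 2$ be an integer. Then $R_n^* = S_n T_n$. In particular $$\det R_n^* = M^*(n) = \sum_{k=1}^n \mu^*(k).$$
   Context: For positive integers $i,j$, $i \parallel j$ means $i \mid j$ and $\gcd(i,j/i)=1$. The unitary Möbius function is $\mu^*(m)=(-1)^{\omega(m)}$, with $\omega(m)$ the number of distinct prime factors of $m$. For real $x>0$ and a positive integer $m$, $M^*(x,m) := \sum_{k \leq x,\ \gcd(k,m)=1}\mu^*(k)$ (sum over positive integers $k$), and $M^*(x) := M^*(x,1)$. $R_n^*=(\rho_{ij})_{1\le i,j\le n}$ is the $n\times n$ matrix with $\rho_{ij}=1$ if $i \parallel j$ or $j=1$, and $\rho_{ij}=0$ otherwise. $S_n=(s_{ij})$ is the $n\times n$ matrix with $s_{ij}=1$ if $i\parallel j$ and $0$ otherwise. $T_n=(t_{ij})$ is the $n\times n$ matrix with $t_{i1}=M^*(n/i,i)$ for all $i$, $t_{ii}=1$ for $i\ge 2$, and $t_{ij}=0$ otherwise. *)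

theory Defs
  imports "Jordan_Normal_Form.Determinant" "HOL-Computational_Algebra.Primes"
begin

definition unitary_dvd :: "nat \<Rightarrow> nat \<Rightarrow> bool" where
  "unitary_dvd i j \<longleftrightarrow> i dvd j \<and> coprime i (j div i)"

definition mu_star :: "nat \<Rightarrow> int" where
  "mu_star m = (-1) ^ card (prime_factors m)"

definition M_star :: "real \<Rightarrow> nat \<Rightarrow> int" where
  "M_star x m = (\<Sum>k\<in>{k::nat. 1 \<le> k \<and> real k \<le> x \<and> coprime k m}. mu_star k)"

(* Matrices are n x n with 0-based indices in Jordan_Normal_Form;
   entry (i,j) corresponds to the paper's entry (i+1, j+1). *)
definition R_star :: "nat \<Rightarrow> int mat" where
  "R_star n = mat n n (\<lambda>(i,j). if unitary_dvd (i+1) (j+1) \<or> j + 1 = 1 then 1 else 0)"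

definition S_mat :: "nat \<Rightarrow> int mat" where
  "S_mat n = mat n n (\<lambda>(i,j). if unitary_dvd (i+1) (j+1) then 1 else 0)"

definition T_mat :: "nat \<Rightarrow> int mat" where
  "T_mat n = mat n n (\<lambda>(i,j). if j + 1 = 1 then M_star (real n / real (i+1)) (i+1)
                              else if i + 1 \<ge> 2 \<and> i = j then 1 else 0)"

end

(*
  The columns of T_n after the first are the unit vectors e_j with j >= 2, so S_n T_n agrees with
  R_n^* outside the first column, and its entry (d, 1) is sum_{d || m <= n} M^*(n/m, m), a sum of
  mu^*(k) over the pairs (m, k) with d || m, gcd(k, m) = 1 and m k <= n. Substituting L = m k, these
  are exactly the pairs (L, k) with d || L <= n and k || L/d, so the entry equals
  sum_{d || L <= n} sum_{k || L/d} mu^*(k) = 1: the inner sum vanishes unless L = d, because for a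
  prime power p^a || L/d the unitary divisors pair up as v and p^a v, which have opposite signs.
  Finally S_n is unitriangular and T_n is lower triangular with diagonal (M^*(n), 1, ..., 1).
*)

theory Submission
  imports Defs
begin

lemma unitary_dvdE:
  assumes "unitary_dvd k N"
  obtains r where "N = k * r" "coprime k r"
  using assms unfolding unitary_dvd_def by (metis dvd_mult_div_cancel)

lemma unitary_dvd_mult_self_iff:
  assumes "0 < k"
  shows "unitary_dvd k (k * r) \<longleftrightarrow> coprime k r"
  using assms by (simp add: unitary_dvd_def)

lemma unitary_dvd_refl: "0 < k \<Longrightarrow> unitary_dvd k k"
  by (simp add: unitary_dvd_def)

lemma finite_unitary_divisors: "0 < N \<Longrightarrow> finite {k. unitary_dvd k N}"
  by (rule finite_subset[of _ "{..N}"]) (auto simp: unitary_dvd_def dest: dvd_imp_le)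

lemma mu_star_mult_coprime:
  assumes "coprime a b"
  shows "mu_star (a * b) = mu_star a * mu_star b"
proof (cases "a = 0 \<or> b = 0")
  case True
  with assms show ?thesis by (auto simp: mu_star_def)
next
  case False
  have "prime_factors a \<inter> prime_factors b = {}"
    using assms by (auto simp: in_prime_factors_iff dest: coprime_common_divisor not_prime_unit)
  then have "card (prime_factors (a * b)) = card (prime_factors a) + card (prime_factors b)"
    using False by (simp add: prime_factors_product card_Un_disjoint)
  then show ?thesis by (simp add: mu_star_def power_add)
qed

lemma mu_star_prime_power:
  assumes "prime p" "0 < a"
  shows "mu_star (p ^ a) = -1"
  using assms by (simp add: mu_star_def prime_factorization_prime_power)

lemma unitary_divisors_prime_power_mult:
  assumes p: "prime p" and a: "0 < a" and pM: "\<not> p dvd M"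
  shows "{k. unitary_dvd k (p ^ a * M)} = {v. unitary_dvd v M} \<union> (*) (p ^ a) ` {v. unitary_dvd v M}"
proof -
  define q where "q = p ^ a"
  have q0: "0 < q" using p by (simp add: q_def prime_gt_0_nat)
  have M0: "0 < M" using pM by (cases "M = 0") auto
  have coprime_q: "coprime q x" if "\<not> p dvd x" for x
    using that p by (simp add: q_def coprime_power_left_iff prime_imp_coprime)
  show ?thesis
  proof (intro equalityI subsetI)
    fix k assume "k \<in> {k. unitary_dvd k (p ^ a * M)}"
    then obtain r where kr: "q * M = k * r" "coprime k r"
      by (auto simp: q_def elim: unitary_dvdE)
    show "k \<in> {v. unitary_dvd v M} \<union> (*) (p ^ a) ` {v. unitary_dvd v M}"
    proof (cases "p dvd k")
      case True
      then have "coprime q r"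
        using kr(2) p by (metis coprime_q coprime_common_divisor not_prime_unit)
      moreover have "q dvd k * r" using kr(1) by (metis dvd_triv_left)
      ultimately obtain v where v: "k = q * v" by (auto simp: coprime_dvd_mult_left_iff)
      with kr q0 have "M = v * r" "coprime v r" by auto
      with v M0 show ?thesis by (auto simp: q_def unitary_dvd_mult_self_iff)
    next
      case False
      then have "coprime k q" using coprime_q by (simp add: coprime_commute)
      moreover have "k dvd q * M" using kr(1) by simp
      ultimately have "k dvd M" by (simp add: coprime_dvd_mult_right_iff)
      then obtain s where s: "M = k * s" by auto
      with kr M0 have "r = q * s" by (simp add: ac_simps)
      with kr(2) s M0 show ?thesis by (auto simp: unitary_dvd_mult_self_iff)
    qed
  next
    fix k assume "k \<in> {v. unitary_dvd v M} \<union> (*) (p ^ a) ` {v. unitary_dvd v M}"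
    then obtain v where v: "unitary_dvd v M" and kv: "k = v \<or> k = q * v" by (auto simp: q_def)
    then obtain s where s: "M = v * s" "coprime v s" by (auto elim: unitary_dvdE)
    have "coprime q v" "coprime q s" using coprime_q[OF pM] s(1) by auto
    with s M0 q0 have "unitary_dvd v (v * (q * s))" "unitary_dvd (q * v) (q * v * s)"
      by (auto simp: unitary_dvd_mult_self_iff coprime_commute)
    moreover have "v * (q * s) = p ^ a * M" "q * v * s = p ^ a * M"
      using s(1) by (simp_all add: q_def)
    ultimately show "k \<in> {k. unitary_dvd k (p ^ a * M)}" using kv by auto
  qed
qed

lemma sum_mu_star_unitary_divisors:
  assumes "0 < N"
  shows "(\<Sum>k | unitary_dvd k N. mu_star k) = (if N = 1 then 1 else 0)"
proof (cases "N = 1")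
  case True
  then have "{k. unitary_dvd k N} = {1}" by (auto simp: unitary_dvd_def)
  with True show ?thesis by (simp add: mu_star_def)
next
  case False
  then obtain p where p: "prime p" "p dvd N" using prime_factor_nat by blast
  define a where "a = multiplicity p N"
  define q where "q = p ^ a"
  obtain M where N: "N = q * M" and pM: "\<not> p dvd M"
    unfolding q_def a_def
    using assms p(1) by (metis multiplicity_decompose' not_prime_unit gr_implies_not0)
  have a: "0 < a" using p assms by (simp add: a_def prime_multiplicity_gt_zero_iff)
  have M0: "0 < M" using pM by (cases "M = 0") auto
  define U where "U = {v. unitary_dvd v M}"
  have p_not_dvd: "\<not> p dvd v" if "v \<in> U" for v
    using that pM by (auto simp: U_def unitary_dvd_def dest: dvd_trans)
  have mu_star_q_mult: "mu_star (q * v) = - mu_star v" if "v \<in> U" for v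
  proof -
    have "coprime q v"
      using p_not_dvd[OF that] p by (simp add: q_def coprime_power_left_iff prime_imp_coprime)
    then show ?thesis using p(1) a by (simp add: q_def mu_star_mult_coprime mu_star_prime_power)
  qed
  have "p dvd q" using a by (simp add: q_def dvd_power)
  then have "U \<inter> (*) q ` U = {}"
    using p_not_dvd by (blast intro: dvd_mult2)
  moreover have "finite U" using M0 by (simp add: U_def finite_unitary_divisors)
  moreover have "inj_on ((*) q) U" using p(1) by (simp add: q_def inj_on_def prime_gt_0_nat)
  moreover have "{k. unitary_dvd k N} = U \<union> (*) q ` U"
    using unitary_divisors_prime_power_mult[OF p(1) a pM] by (simp add: N U_def q_def)
  ultimately have "(\<Sum>k | unitary_dvd k N. mu_star k)
      = (\<Sum>v\<in>U. mu_star v) + (\<Sum>v\<in>U. mu_star (q * v))"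
    by (simp add: sum.union_disjoint sum.reindex)
  also have "\<dots> = 0" using mu_star_q_mult by (simp add: sum_negf)
  finally show ?thesis using False by simp
qed

lemma M_star_of_nat_div:
  assumes "0 < m"
  shows "M_star (real n / real m) m = (\<Sum>k | 0 < k \<and> m * k \<le> n \<and> coprime k m. mu_star k)"
proof -
  have "real k \<le> real n / real m \<longleftrightarrow> m * k \<le> n" for k
    using assms by (simp add: le_divide_eq mult.commute flip: of_nat_mult)
  then show ?thesis unfolding M_star_def by (simp add: Suc_le_eq)
qed

lemma unitary_dvd_coprime_iff:
  assumes m: "0 < m" and k: "0 < k"
  shows "unitary_dvd d m \<and> coprime k m
    \<longleftrightarrow> unitary_dvd d (m * k) \<and> unitary_dvd k (m * k div d)"
proof
  assume l: "unitary_dvd d m \<and> coprime k m"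
  then obtain e where e: "m = d * e" "coprime d e" by (auto elim: unitary_dvdE)
  have d: "0 < d" using e m by (cases "d = 0") auto
  have "coprime d k" "coprime k e" using l e(1) by (auto simp: coprime_commute)
  with e d k have "unitary_dvd d (d * (e * k))" "unitary_dvd k (k * e)"
    by (simp_all add: unitary_dvd_mult_self_iff)
  with e(1) d show "unitary_dvd d (m * k) \<and> unitary_dvd k (m * k div d)"
    by (simp add: ac_simps)
next
  assume r: "unitary_dvd d (m * k) \<and> unitary_dvd k (m * k div d)"
  then obtain e where e: "m * k = d * e" "coprime d e" by (auto elim: unitary_dvdE)
  have d: "0 < d" using e m k by (cases "d = 0") auto
  with r e obtain f where f: "e = k * f" "coprime k f" by (auto elim: unitary_dvdE)
  with e(1) k have "m = d * f" by (simp add: ac_simps)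
  moreover have "coprime d f" "coprime k d" using e(2) f(1) by (auto simp: coprime_commute)
  ultimately show "unitary_dvd d m \<and> coprime k m"
    using d f(2) by (simp add: unitary_dvd_mult_self_iff)
qed

lemma sum_M_star_unitary_multiples_eq:
  "(\<Sum>m | 0 < m \<and> m \<le> n \<and> unitary_dvd d m. M_star (real n / real m) m)
    = (\<Sum>L | 0 < L \<and> L \<le> n \<and> unitary_dvd d L. \<Sum>k | unitary_dvd k (L div d). mu_star k)"
proof -
  define A where "A = {m. 0 < m \<and> m \<le> n \<and> unitary_dvd d m}"
  define K where "K m = {k. 0 < k \<and> m * k \<le> n \<and> coprime k m}" for m
  define U where "U L = {k. unitary_dvd k (L div d)}" for L
  have fin_A: "finite A" by (simp add: A_def)
  have fin_K: "finite (K m)" if "m \<in> A" for m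
  proof (rule finite_subset[of _ "{..n}"])
    show "K m \<subseteq> {..n}" using that dual_order.trans by (fastforce simp: A_def K_def)
  qed simp
  have fin_U: "finite (U L)" if "L \<in> A" for L
    using that by (auto simp: A_def U_def unitary_dvd_def finite_unitary_divisors elim!: dvdE)
  have "(\<Sum>m\<in>A. M_star (real n / real m) m) = (\<Sum>m\<in>A. \<Sum>k\<in>K m. mu_star k)"
    by (simp add: A_def K_def M_star_of_nat_div)
  also have "\<dots> = (\<Sum>(m, k)\<in>Sigma A K. mu_star k)"
    using fin_A fin_K by (simp add: sum.Sigma)
  also have "\<dots> = (\<Sum>(L, k)\<in>Sigma A U. mu_star k)"
  proof (rule sum.reindex_bij_witness
      [where j = "\<lambda>(m, k). (m * k, k)" and i = "\<lambda>(L, k). (L div k, k)"])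
    fix a assume "a \<in> Sigma A K"
    moreover obtain m k where a: "a = (m, k)" by fastforce
    ultimately have "0 < m" "m \<le> n" "unitary_dvd d m" "0 < k" "m * k \<le> n" "coprime k m"
      by (auto simp: A_def K_def)
    with unitary_dvd_coprime_iff[of m k d] a
    show "(\<lambda>(m, k). (m * k, k)) a \<in> Sigma A U"
      and "(\<lambda>(L, k). (L div k, k)) ((\<lambda>(m, k). (m * k, k)) a) = a"
      and "(\<lambda>(L, k). mu_star k) ((\<lambda>(m, k). (m * k, k)) a) = (\<lambda>(m, k). mu_star k) a"
      by (auto simp: A_def U_def)
  next
    fix b assume "b \<in> Sigma A U"
    moreover obtain L k where b: "b = (L, k)" by fastforce
    ultimately have L: "L \<in> A" and k: "unitary_dvd k (L div d)" by (auto simp: U_def)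
    then obtain e f where "L = d * e" "e = k * f"
      by (auto simp: A_def unitary_dvd_def elim!: dvdE)
    with L have m: "L = (d * f) * k" "L div k = d * f" "0 < d * f" "0 < k"
      by (auto simp: A_def)
    moreover have "d * f \<le> n"
    proof -
      have "d * f \<le> L" using m by simp
      with L show ?thesis by (simp add: A_def)
    qed
    ultimately show "(\<lambda>(m, k). (m * k, k)) ((\<lambda>(L, k). (L div k, k)) b) = b"
      and "(\<lambda>(L, k). (L div k, k)) b \<in> Sigma A K"
      using L k unitary_dvd_coprime_iff[of "d * f" k d] by (auto simp: b A_def K_def)
  qed
  also have "\<dots> = (\<Sum>L\<in>A. \<Sum>k\<in>U L. mu_star k)"
    using fin_A fin_U by (simp add: sum.Sigma)
  finally show ?thesis by (simp add: A_def U_def)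
qed

lemma sum_M_star_unitary_multiples:
  assumes "0 < d" "d \<le> n"
  shows "(\<Sum>m | 0 < m \<and> m \<le> n \<and> unitary_dvd d m. M_star (real n / real m) m) = 1"
proof -
  define A where "A = {L. 0 < L \<and> L \<le> n \<and> unitary_dvd d L}"
  have "(\<Sum>L\<in>A. \<Sum>k | unitary_dvd k (L div d). mu_star k)
      = (\<Sum>L\<in>A. if L = d then 1 else 0)"
  proof (rule sum.cong[OF refl])
    fix L assume "L \<in> A"
    then obtain e where "L = d * e" "0 < e" by (auto simp: A_def unitary_dvd_def elim!: dvdE)
    with assms(1) show "(\<Sum>k | unitary_dvd k (L div d). mu_star k) = (if L = d then 1 else 0)"
      by (simp add: sum_mu_star_unitary_divisors)
  qed
  also have "\<dots> = 1"
    using assms by (simp add: A_def unitary_dvd_refl)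
  finally show ?thesis by (simp add: A_def sum_M_star_unitary_multiples_eq)
qed

lemma M_star_of_nat: "M_star (real n) 1 = (\<Sum>k = 1..n. mu_star k)"
proof -
  have "{k. 1 \<le> k \<and> real k \<le> real n \<and> coprime k 1} = {1..n}" by auto
  then show ?thesis by (simp add: M_star_def)
qed

lemma R_star_eq_S_mat_mult_T_mat: "R_star n = S_mat n * T_mat n"
proof (rule eq_matI)
  fix i j assume "i < dim_row (S_mat n * T_mat n)" "j < dim_col (S_mat n * T_mat n)"
  then have i: "i < n" and j: "j < n" by (simp_all add: S_mat_def T_mat_def)
  have entry: "(S_mat n * T_mat n) $$ (i, j) = (\<Sum>k<n. S_mat n $$ (i, k) * T_mat n $$ (k, j))"
    using i j by (simp add: S_mat_def T_mat_def scalar_prod_def atLeast0LessThan)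
  show "R_star n $$ (i, j) = (S_mat n * T_mat n) $$ (i, j)"
  proof (cases "j = 0")
    case True
    have "(\<Sum>k<n. S_mat n $$ (i, k) * T_mat n $$ (k, j))
        = (\<Sum>k<n. if unitary_dvd (Suc i) (Suc k)
                   then M_star (real n / real (Suc k)) (Suc k) else 0)"
      using True i by (intro sum.cong) (auto simp: S_mat_def T_mat_def)
    also have "\<dots> = (\<Sum>m = 1..n. if unitary_dvd (Suc i) m then M_star (real n / real m) m else 0)"
      by (simp add: sum.atLeast1_atMost_eq)
    also have "\<dots> = (\<Sum>m | 0 < m \<and> m \<le> n \<and> unitary_dvd (Suc i) m. M_star (real n / real m) m)"
      by (simp add: sum.inter_filter[symmetric] Suc_le_eq)
    also have "\<dots> = 1" using i by (simp add: sum_M_star_unitary_multiples)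
    finally show ?thesis using entry True i by (simp add: R_star_def)
  next
    case False
    have "(\<Sum>k<n. S_mat n $$ (i, k) * T_mat n $$ (k, j))
        = (\<Sum>k<n. if k = j then S_mat n $$ (i, j) else 0)"
      using False j by (intro sum.cong) (auto simp: T_mat_def)
    then show ?thesis using entry False i j by (simp add: R_star_def S_mat_def)
  qed
qed (simp_all add: R_star_def S_mat_def T_mat_def)

lemma det_S_mat: "det (S_mat n) = 1"
proof -
  have "upper_triangular (S_mat n)"
    by (auto simp: upper_triangular_def S_mat_def unitary_dvd_def dest: dvd_imp_le)
  then have "det (S_mat n) = (\<Prod>i = 0..<n. S_mat n $$ (i, i))"
    by (simp add: det_upper_triangular[of _ n] prod_list_diag_prod S_mat_def)
  also have "\<dots> = 1" by (simp add: S_mat_def unitary_dvd_def)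
  finally show ?thesis .
qed

lemma det_T_mat:
  assumes "0 < n"
  shows "det (T_mat n) = M_star (real n) 1"
proof -
  have "det (T_mat n) = (\<Prod>i = 0..<n. T_mat n $$ (i, i))"
    by (subst det_lower_triangular[of n]) (auto simp: T_mat_def prod_list_diag_prod)
  also have "\<dots> = (\<Prod>i = 0..<n. if i = 0 then M_star (real n) 1 else 1)"
    by (intro prod.cong) (auto simp: T_mat_def)
  also have "\<dots> = M_star (real n) 1" using assms by (simp add: prod.delta)
  finally show ?thesis .
qed

theorem theorem2:
  fixes n :: nat
  assumes "n \<ge> 2"
  shows "R_star n = S_mat n * T_mat n
    \<and> det (R_star n) = M_star (real n) 1
    \<and> M_star (real n) 1 = (\<Sum>k=1..n. mu_star k)"
proof -
  have "det (R_star n) = det (S_mat n) * det (T_mat n)"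
    by (simp add: R_star_eq_S_mat_mult_T_mat det_mult[of _ n] S_mat_def T_mat_def)
  also have "\<dots> = M_star (real n) 1"
    using assms by (simp add: det_S_mat det_T_mat)
  finally have "det (R_star n) = M_star (real n) 1" .
  with R_star_eq_S_mat_mult_T_mat M_star_of_nat show ?thesis by blast
qed

end
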